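(* Let $X$ be a real random variable with cumulative distribution function $F$ and assume there exists $\epsilon>0$ with $\mathbb{E}[e^{-\epsilon X}]<\infty$. Let $p(-k)=\int_{-\infty}^{-k}(e^{-k}-e^x)\,dF(x)$. If $k\mapsto-\log F(-k)$ is regularly varying (at $+\infty$), then $k\mapsto-\log p(-k)$ is regularly varying and, as $k\to\infty$, $$-\log p(-k)\sim k-\log F(-k).$$
   Context: A measurable function $g$, positive for large $x$, is regularly varying (at $+\infty$) if there is $\alpha\in\mathbb{R}$ with $\lim_{x\to\infty}g(\lambda x)/g(x)=\lambda^\alpha$ for every $\lambda>0$. $g\sim h$ means $g(k)/h(k)\to1$ as $k\to\infty$. *)

theory Defs
  imports "HOL-Probability.Probability" "HOL-Library.Landau_Symbols"
begin

definition regularly_varying :: "(real \<Rightarrow> real) \<Rightarrow> bool" where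
  "regularly_varying g \<longleftrightarrow>
     g \<in> borel_measurable borel \<and>
     (\<forall>\<^sub>F x in at_top. g x > 0) \<and>
     (\<exists>\<alpha>::real. \<forall>l>0. ((\<lambda>x. g (l * x) / g x) \<longlongrightarrow> l powr \<alpha>) at_top)"

end

theory Submission
  imports Defs
begin

(* Write g k = -ln F(-k) and h k = -ln p(-k). Bounding the put payoff (e^{-k} - e^x)^+ by e^{-k}
   on {x <= -k} from above and by e^{-k} (1 - e^{-1}) on {x <= -k-1} from below squeezes h k
   between k + g k and (k + 1) + g (k + 1) + const. The exponential moment gives the Chernoff bound
   F(-k) = O(e^{-eps k}), so g grows at least linearly; hence the index of g is at least 1 and
   G k = k + g k is regularly varying with the same index. Since G is monotone and regularly
   varying, G (k + 1) / G k tends to 1, so h / G tends to 1 and h inherits the regular variation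
   of G. *)

section \<open>Regularly varying functions\<close>

definition has_rv_index :: "(real \<Rightarrow> real) \<Rightarrow> real \<Rightarrow> bool" where
  "has_rv_index g \<alpha> \<longleftrightarrow> (\<forall>l>0. ((\<lambda>x. g (l * x) / g x) \<longlongrightarrow> l powr \<alpha>) at_top)"

lemma regularly_varying_iff_has_rv_index:
  "regularly_varying g \<longleftrightarrow>
     g \<in> borel_measurable borel \<and> (\<forall>\<^sub>F x in at_top. g x > 0) \<and> (\<exists>\<alpha>. has_rv_index g \<alpha>)"
  by (simp add: regularly_varying_def has_rv_index_def)

lemma has_rv_index_divide_identity:
  assumes "has_rv_index g \<alpha>"
  shows "has_rv_index (\<lambda>x. g x / x) (\<alpha> - 1)"
  unfolding has_rv_index_def
proof (intro allI impI)
  fix l :: real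
  assume l: "l > 0"
  have "((\<lambda>x. g (l * x) / g x / l) \<longlongrightarrow> l powr \<alpha> / l) at_top"
    using assms l unfolding has_rv_index_def by (intro tendsto_divide tendsto_const) auto
  moreover have "\<forall>\<^sub>F x in at_top. g (l * x) / g x / l = g (l * x) / (l * x) / (g x / x)"
    using eventually_gt_at_top[of 0] by eventually_elim (use l in auto)
  moreover have "l powr \<alpha> / l = l powr (\<alpha> - 1)"
    using l by (simp add: powr_diff)
  ultimately show "((\<lambda>x. g (l * x) / (l * x) / (g x / x)) \<longlongrightarrow> l powr (\<alpha> - 1)) at_top"
    by (simp add: tendsto_cong)
qed

lemma doubling_contraction_not_eventually_ge:
  fixes \<phi> :: "real \<Rightarrow> real"
  assumes q: "0 \<le> q" "q < 1" and c: "c > 0"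
    and contr: "\<forall>\<^sub>F x in at_top. \<phi> (2 * x) \<le> q * \<phi> x"
  shows "\<not> (\<forall>\<^sub>F x in at_top. c \<le> \<phi> x)"
proof
  assume "\<forall>\<^sub>F x in at_top. c \<le> \<phi> x"
  with contr have "\<forall>\<^sub>F x in at_top. 0 \<le> x \<and> \<phi> (2 * x) \<le> q * \<phi> x \<and> c \<le> \<phi> x"
    by (intro eventually_conj eventually_ge_at_top)
  then obtain K where K: "\<And>x. x \<ge> K \<Longrightarrow> 0 \<le> x \<and> \<phi> (2 * x) \<le> q * \<phi> x \<and> c \<le> \<phi> x"
    unfolding eventually_at_top_linorder by blast
  have K_le: "K \<le> 2 ^ n * K" for n :: nat
    using K[of K] by (simp add: mult_le_cancel_right1)
  have iter: "\<phi> (2 ^ n * K) \<le> q ^ n * \<phi> K" for n :: nat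
  proof (induction n)
    case (Suc n)
    have "\<phi> (2 ^ Suc n * K) \<le> q * \<phi> (2 ^ n * K)"
      using K[OF K_le[of n]] by (simp add: mult.assoc)
    also have "\<dots> \<le> q ^ Suc n * \<phi> K"
      using Suc q(1) by (simp add: mult_left_mono mult.assoc)
    finally show ?case .
  qed simp
  have "(\<lambda>n. q ^ n * \<phi> K) \<longlonglongrightarrow> 0 * \<phi> K"
    using q by (intro tendsto_mult_right LIMSEQ_power_zero) auto
  then have "\<forall>\<^sub>F n in sequentially. q ^ n * \<phi> K < c"
    using c by (intro order_tendstoD(2)) auto
  then obtain n where "q ^ n * \<phi> K < c"
    by (auto simp: eventually_sequentially)
  moreover have "c \<le> \<phi> (2 ^ n * K)"
    using K[OF K_le[of n]] by blast
  ultimately show False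
    using iter[of n] by linarith
qed

lemma doubling_expansion_tendsto_at_top:
  fixes \<phi> :: "real \<Rightarrow> real"
  assumes q: "q > 1" and c: "c > 0"
    and expand: "\<forall>\<^sub>F x in at_top. q * \<phi> x \<le> \<phi> (2 * x)"
    and ge: "\<forall>\<^sub>F x in at_top. c \<le> \<phi> x"
  shows "filterlim \<phi> at_top at_top"
proof -
  have "\<forall>\<^sub>F x in at_top. 0 \<le> x \<and> q * \<phi> x \<le> \<phi> (2 * x) \<and> c \<le> \<phi> x"
    using expand ge by (intro eventually_conj eventually_ge_at_top)
  then obtain K where K: "\<And>x. x \<ge> K \<Longrightarrow> 0 \<le> x \<and> q * \<phi> x \<le> \<phi> (2 * x) \<and> c \<le> \<phi> x"
    unfolding eventually_at_top_linorder by blast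
  have iter: "q ^ n * c \<le> \<phi> y" if "2 ^ n * K \<le> y" for n :: nat and y
    using that
  proof (induction n arbitrary: y)
    case 0
    then show ?case
      using K[of y] by simp
  next
    case (Suc n)
    have "K \<le> 2 ^ n * K"
      using K[of K] by (simp add: mult_le_cancel_right1)
    moreover have "2 ^ n * K \<le> y / 2"
      using Suc.prems by simp
    ultimately have "K \<le> y / 2"
      by linarith
    have "q ^ Suc n * c = q * (q ^ n * c)"
      by simp
    also have "\<dots> \<le> q * \<phi> (y / 2)"
      using Suc.IH[OF \<open>2 ^ n * K \<le> y / 2\<close>] q by simp
    also have "\<dots> \<le> \<phi> y"
      using K[OF \<open>K \<le> y / 2\<close>] by simp
    finally show ?case .
  qed
  show ?thesis
    unfolding filterlim_at_top
  proof
    fix Z :: real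
    obtain n where "Z / c < q ^ n"
      using real_arch_pow[OF q] by blast
    then have "Z \<le> q ^ n * c"
      using c by (simp add: divide_less_eq)
    with iter[of n] show "\<forall>\<^sub>F x in at_top. Z \<le> \<phi> x"
      unfolding eventually_at_top_linorder by (metis order_trans)
  qed
qed

lemma has_rv_index_nonneg:
  fixes \<phi> :: "real \<Rightarrow> real"
  assumes rv: "has_rv_index \<phi> \<gamma>" and c: "c > 0" and ge: "\<forall>\<^sub>F x in at_top. c \<le> \<phi> x"
  shows "\<gamma> \<ge> 0"
proof (rule ccontr)
  assume "\<not> \<gamma> \<ge> 0"
  then have "2 powr \<gamma> < 1"
    by (simp add: powr_less_one)
  then obtain q where q: "2 powr \<gamma> < q" "q < 1"
    using dense by blast
  have "\<forall>\<^sub>F x in at_top. \<phi> (2 * x) / \<phi> x < q"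
    using order_tendstoD(2)[OF rv[unfolded has_rv_index_def, rule_format, of 2] q(1)] by simp
  with ge have "\<forall>\<^sub>F x in at_top. \<phi> (2 * x) \<le> q * \<phi> x"
    by eventually_elim (use c in \<open>simp add: divide_less_eq\<close>)
  moreover have "0 \<le> q"
    using q(1) powr_ge_zero[of 2 \<gamma>] by linarith
  ultimately show False
    using doubling_contraction_not_eventually_ge[of q c \<phi>] q(2) c ge by blast
qed

lemma has_rv_index_pos_tendsto_at_top:
  fixes \<phi> :: "real \<Rightarrow> real"
  assumes rv: "has_rv_index \<phi> \<gamma>" and \<gamma>: "\<gamma> > 0"
    and c: "c > 0" and ge: "\<forall>\<^sub>F x in at_top. c \<le> \<phi> x"
  shows "filterlim \<phi> at_top at_top"
proof -
  have "1 < 2 powr \<gamma>"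
    using \<gamma> by simp
  then obtain q where q: "1 < q" "q < 2 powr \<gamma>"
    using dense by blast
  have "\<forall>\<^sub>F x in at_top. q < \<phi> (2 * x) / \<phi> x"
    using order_tendstoD(1)[OF rv[unfolded has_rv_index_def, rule_format, of 2] q(2)] by simp
  with ge have "\<forall>\<^sub>F x in at_top. q * \<phi> x \<le> \<phi> (2 * x)"
    by eventually_elim (use c in \<open>simp add: less_divide_eq\<close>)
  then show ?thesis
    using doubling_expansion_tendsto_at_top q(1) c ge by blast
qed

lemma has_rv_index_add_identity:
  assumes rv: "has_rv_index g \<alpha>" and c: "c > 0" and lin: "\<forall>\<^sub>F x in at_top. c * x \<le> g x"
  shows "has_rv_index (\<lambda>x. x + g x) \<alpha>"
proof -
  define \<phi> where "\<phi> x = g x / x" for x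
  have rv_\<phi>: "has_rv_index \<phi> (\<alpha> - 1)"
    unfolding \<phi>_def by (rule has_rv_index_divide_identity[OF rv])
  have lin_pos: "\<forall>\<^sub>F x in at_top. 0 < x \<and> c * x \<le> g x"
    using lin by (intro eventually_conj eventually_gt_at_top)
  have ge_\<phi>: "\<forall>\<^sub>F x in at_top. c \<le> \<phi> x"
    using lin_pos by eventually_elim (simp add: \<phi>_def pos_le_divide_eq)
  have "\<alpha> \<ge> 1"
    using has_rv_index_nonneg[OF rv_\<phi> c ge_\<phi>] by simp
  show ?thesis
    unfolding has_rv_index_def
  proof (intro allI impI)
    fix l :: real
    assume l: "l > 0"
    (* (l x + g (l x)) / (x + g x) is a convex combination of l and r x with weight w x on l:
       for index 1 both tend to l, for index > 1 the weight w x tends to 0. *)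
    define r where "r x = g (l * x) / g x" for x
    define w where "w x = x / (x + g x)" for x
    have r: "(r \<longlongrightarrow> l powr \<alpha>) at_top"
      unfolding r_def using rv l by (simp add: has_rv_index_def)
    have w_bounds: "\<forall>\<^sub>F x in at_top. 0 \<le> w x \<and> w x \<le> 1 \<and> w x \<le> inverse (\<phi> x)"
      using lin_pos
    proof eventually_elim
      case (elim x)
      then have "0 < g x"
        using c mult_pos_pos[of c x] by linarith
      then have "x / (x + g x) \<le> x / g x"
        using elim by (intro divide_left_mono) auto
      then show ?case
        using elim \<open>0 < g x\<close> by (simp add: w_def \<phi>_def)
    qed
    have convex: "\<forall>\<^sub>F x in at_top. (l * x + g (l * x)) / (x + g x) = r x + w x * (l - r x)"
      using lin_pos
    proof eventually_elim
      case (elim x)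
      then have "0 < g x" "0 < x + g x"
        using c mult_pos_pos[of c x] by linarith+
      then have "1 - w x = g x / (x + g x)"
        by (simp add: w_def field_simps)
      have "r x + w x * (l - r x) = r x * (1 - w x) + l * w x"
        by (simp add: algebra_simps)
      also have "\<dots> = g (l * x) / (x + g x) + l * x / (x + g x)"
        using \<open>1 - w x = _\<close> \<open>0 < g x\<close> by (simp add: r_def w_def)
      finally show ?case
        by (simp add: add_divide_distrib)
    qed
    have "((\<lambda>x. w x * (l - r x)) \<longlongrightarrow> 0) at_top"
    proof (cases "\<alpha> = 1")
      case True
      then have "((\<lambda>x. l - r x) \<longlongrightarrow> 0) at_top"
        using tendsto_diff[OF tendsto_const r, of l] l by simp
      then have "((\<lambda>x. \<bar>l - r x\<bar>) \<longlongrightarrow> 0) at_top"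
        by (rule tendsto_rabs_zero)
      moreover have "\<forall>\<^sub>F x in at_top. norm (w x * (l - r x)) \<le> \<bar>l - r x\<bar>"
        using w_bounds by eventually_elim (simp add: abs_mult mult_left_le_one_le)
      ultimately show ?thesis
        by (rule Lim_null_comparison[rotated])
    next
      case False
      with \<open>\<alpha> \<ge> 1\<close> have "\<alpha> - 1 > 0"
        by simp
      then have "filterlim \<phi> at_top at_top"
        by (rule has_rv_index_pos_tendsto_at_top[OF rv_\<phi> _ c ge_\<phi>])
      then have "((\<lambda>x. inverse (\<phi> x)) \<longlongrightarrow> 0) at_top"
        by (rule tendsto_inverse_0_at_top)
      moreover have "\<forall>\<^sub>F x in at_top. 0 \<le> w x" "\<forall>\<^sub>F x in at_top. w x \<le> inverse (\<phi> x)"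
        using w_bounds by (simp_all add: eventually_conj_iff)
      ultimately have "(w \<longlongrightarrow> 0) at_top"
        by (rule tendsto_sandwich[OF _ _ tendsto_const, rotated 2])
      from tendsto_mult[OF this tendsto_diff[OF tendsto_const r]]
      show ?thesis
        by simp
    qed
    from tendsto_add[OF r this]
    have "((\<lambda>x. r x + w x * (l - r x)) \<longlongrightarrow> l powr \<alpha>) at_top"
      by simp
    then show "((\<lambda>x. (l * x + g (l * x)) / (x + g x)) \<longlongrightarrow> l powr \<alpha>) at_top"
      using convex by (rule Lim_transform_eventually[OF _ eventually_mono]) simp
  qed
qed

lemma tendsto_shift_ratio_one_if_mono_rv:
  fixes G :: "real \<Rightarrow> real"
  assumes mono: "mono G" and rv: "has_rv_index G \<beta>" and top: "filterlim G at_top at_top"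
  shows "((\<lambda>x. G (x + 1) / G x) \<longlongrightarrow> 1) at_top"
proof -
  have pos: "\<forall>\<^sub>F x in at_top. 0 < G x"
    using top[unfolded filterlim_at_top_dense, rule_format, of 0] .
  show ?thesis
  proof (rule order_tendstoI)
    fix a :: real
    assume "a < 1"
    show "\<forall>\<^sub>F x in at_top. a < G (x + 1) / G x"
      using pos
    proof eventually_elim
      case (elim x)
      have "G x \<le> G (x + 1)"
        by (rule monoD[OF mono]) simp
      with elim have "1 \<le> G (x + 1) / G x"
        by simp
      with \<open>a < 1\<close> show ?case
        by linarith
    qed
  next
    fix a :: real
    assume "a > 1"
    have "((\<lambda>l. l powr \<beta>) \<longlongrightarrow> 1 powr \<beta>) (at_right 1)"
      by (intro tendsto_intros) auto
    then have "\<forall>\<^sub>F l in at_right 1. 1 < l \<and> l powr \<beta> < a"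
      using \<open>a > 1\<close> by (intro eventually_conj eventually_at_right_less order_tendstoD(2)) auto
    then obtain l where l: "1 < l" "l powr \<beta> < a"
      using eventually_happens'[of "at_right (1::real)"] by auto
    have "\<forall>\<^sub>F x in at_top. G (l * x) / G x < a"
      using l rv[unfolded has_rv_index_def, rule_format, of l] by (simp add: order_tendstoD(2))
    moreover have "\<forall>\<^sub>F x in at_top. x + 1 \<le> l * x"
      using eventually_ge_at_top[of "1 / (l - 1)"]
      by eventually_elim (use l(1) in \<open>simp add: divide_le_eq algebra_simps\<close>)
    ultimately show "\<forall>\<^sub>F x in at_top. G (x + 1) / G x < a"
      using pos
    proof eventually_elim
      case (elim x)
      have "G (x + 1) \<le> G (l * x)"
        using monoD[OF mono elim(2)] .
      then have "G (x + 1) / G x \<le> G (l * x) / G x"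
        using elim(3) by (simp add: divide_right_mono)
      with elim(1) show ?case
        by linarith
    qed
  qed
qed

lemma tendsto_ratio_one_if_shift_bounds:
  fixes G h :: "real \<Rightarrow> real"
  assumes top: "filterlim G at_top at_top" and shift: "((\<lambda>x. G (x + 1) / G x) \<longlongrightarrow> 1) at_top"
    and bounds: "\<forall>\<^sub>F x in at_top. G x \<le> h x \<and> h x \<le> G (x + 1) + d"
  shows "((\<lambda>x. h x / G x) \<longlongrightarrow> 1) at_top"
proof (rule tendsto_sandwich[OF _ _ tendsto_const])
  have pos: "\<forall>\<^sub>F x in at_top. 0 < G x"
    using top[unfolded filterlim_at_top_dense, rule_format, of 0] .
  show "\<forall>\<^sub>F x in at_top. 1 \<le> h x / G x"
    using pos bounds by eventually_elim simp
  show "\<forall>\<^sub>F x in at_top. h x / G x \<le> G (x + 1) / G x + d / G x"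
    using pos bounds
    by eventually_elim (simp add: add_divide_distrib[symmetric] divide_right_mono)
  have "((\<lambda>x. d / G x) \<longlongrightarrow> 0) at_top"
    by (rule tendsto_divide_0[OF tendsto_const filterlim_at_top_imp_at_infinity[OF top]])
  from tendsto_add[OF shift this]
  show "((\<lambda>x. G (x + 1) / G x + d / G x) \<longlongrightarrow> 1) at_top"
    by simp
qed

lemma has_rv_index_if_ratio_tendsto_one:
  fixes G h :: "real \<Rightarrow> real"
  assumes rv: "has_rv_index G \<beta>" and ratio: "((\<lambda>x. h x / G x) \<longlongrightarrow> 1) at_top"
  shows "has_rv_index h \<beta>"
  unfolding has_rv_index_def
proof (intro allI impI)
  fix l :: real
  assume l: "l > 0"
  have "filterlim (\<lambda>x. l * x) at_top at_top"
    by (rule filterlim_tendsto_pos_mult_at_top[OF tendsto_const l filterlim_ident])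
  from filterlim_compose[OF ratio this]
  have ratio_l: "((\<lambda>x. h (l * x) / G (l * x)) \<longlongrightarrow> 1) at_top"
    by simp
  have rv_l: "((\<lambda>x. G (l * x) / G x) \<longlongrightarrow> l powr \<beta>) at_top"
    using rv l by (simp add: has_rv_index_def)
  have "((\<lambda>x. h (l * x) / G (l * x) * (G (l * x) / G x) / (h x / G x)) \<longlongrightarrow> 1 * l powr \<beta> / 1) at_top"
    by (rule tendsto_divide[OF tendsto_mult[OF ratio_l rv_l] ratio]) simp
  moreover have "\<forall>\<^sub>F x in at_top. h (l * x) / G (l * x) \<noteq> 0 \<and> h x / G x \<noteq> 0"
    by (intro eventually_conj tendsto_imp_eventually_ne[OF ratio_l] tendsto_imp_eventually_ne[OF ratio]) simp_all
  then have "\<forall>\<^sub>F x in at_top.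
      h (l * x) / G (l * x) * (G (l * x) / G x) / (h x / G x) = h (l * x) / h x"
    by eventually_elim simp
  ultimately show "((\<lambda>x. h (l * x) / h x) \<longlongrightarrow> l powr \<beta>) at_top"
    by (simp add: Lim_transform_eventually)
qed

lemma has_rv_index_of_shift_bounds:
  fixes g h :: "real \<Rightarrow> real"
  assumes mono: "mono g" and rv: "has_rv_index g \<alpha>"
    and c: "c > 0" and lin: "\<forall>\<^sub>F x in at_top. c * x \<le> g x"
    and bounds: "\<forall>\<^sub>F x in at_top. x + g x \<le> h x \<and> h x \<le> (x + 1) + g (x + 1) + d"
  shows "has_rv_index h \<alpha>" and "((\<lambda>x. h x / (x + g x)) \<longlongrightarrow> 1) at_top"
proof -
  define G where "G x = x + g x" for x
  have rv_G: "has_rv_index G \<alpha>"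
    unfolding G_def by (rule has_rv_index_add_identity[OF rv c lin])
  have mono_G: "mono G"
    unfolding G_def mono_def by (auto intro: add_mono monoD[OF mono])
  have "\<forall>\<^sub>F x in at_top. x \<le> G x"
    using lin eventually_ge_at_top[of 0]
  proof eventually_elim
    case (elim x)
    then have "0 \<le> g x"
      using c mult_nonneg_nonneg[of c x] by linarith
    then show ?case
      by (simp add: G_def)
  qed
  then have top: "filterlim G at_top at_top"
    by (rule filterlim_at_top_mono[OF filterlim_ident])
  have "((\<lambda>x. h x / G x) \<longlongrightarrow> 1) at_top"
    using tendsto_ratio_one_if_shift_bounds[OF top tendsto_shift_ratio_one_if_mono_rv[OF mono_G rv_G top]]
      bounds by (simp add: G_def)
  then show "has_rv_index h \<alpha>" and "((\<lambda>x. h x / (x + g x)) \<longlongrightarrow> 1) at_top"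
    using has_rv_index_if_ratio_tendsto_one[OF rv_G] by (simp_all add: G_def)
qed

section \<open>Put prices\<close>

definition put_price :: "real measure \<Rightarrow> real \<Rightarrow> real" where
  "put_price \<mu> k = (\<integral>x. max 0 (exp (-k) - exp x) \<partial>\<mu>)"

lemma put_price_eq_set_integral: "put_price \<mu> k = (LINT x:{..-k}|\<mu>. exp (-k) - exp x)"
  unfolding put_price_def set_lebesgue_integral_def
proof (intro Bochner_Integration.integral_cong refl)
  fix x :: real
  show "max 0 (exp (-k) - exp x) = indicator {..-k} x *\<^sub>R (exp (-k) - exp x)"
    by (cases "x \<le> -k") (simp_all add: indicator_def)
qed

context finite_borel_measure
begin

lemma integrable_put_payoff: "integrable M (\<lambda>x. max 0 (exp (-k) - exp x))"
proof (rule integrable_const_bound[where B = "exp (-k)"])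
  show "AE x in M. norm (max 0 (exp (-k) - exp x)) \<le> exp (-k)"
    by simp
  have "(\<lambda>x. max 0 (exp (-k) - exp x)) \<in> borel_measurable borel"
    by measurable
  then show "(\<lambda>x. max 0 (exp (-k) - exp x)) \<in> borel_measurable M"
    by (simp add: measurable_cong_sets[OF M_is_borel refl])
qed

lemma put_price_antimono: "k \<le> k' \<Longrightarrow> put_price M k' \<le> put_price M k"
  unfolding put_price_def by (intro integral_mono integrable_put_payoff max.mono) auto

lemma integrable_indicator_atMost: "integrable M (indicator {..a} :: real \<Rightarrow> real)"
  by (intro integrable_real_indicator) (simp_all add: M_is_borel emeasure_finite less_top[symmetric])

lemma put_price_le_cdf: "put_price M k \<le> exp (-k) * cdf M (-k)"
proof -
  have "put_price M k \<le> (\<integral>x. exp (-k) * indicator {..-k} x \<partial>M)"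
    unfolding put_price_def
  proof (rule integral_mono[OF integrable_put_payoff integrable_mult_right[OF integrable_indicator_atMost]])
    fix x :: real
    show "max 0 (exp (-k) - exp x) \<le> exp (-k) * indicator {..-k} x"
      by (cases "x \<le> -k") (simp_all add: indicator_def)
  qed
  also have "\<dots> = exp (-k) * cdf M (-k)"
    by (simp add: cdf_def M_is_borel)
  finally show ?thesis .
qed

lemma cdf_shift_le_put_price: "exp (-k) * (1 - exp (-1)) * cdf M (-(k + 1)) \<le> put_price M k"
proof -
  have "exp (-k) * (1 - exp (-1)) * cdf M (-(k + 1))
      = (\<integral>x. exp (-k) * (1 - exp (-1)) * indicator {..-(k + 1)} x \<partial>M)"
    by (simp add: cdf_def M_is_borel)
  also have "\<dots> \<le> put_price M k"
    unfolding put_price_def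
  proof (rule integral_mono[OF integrable_mult_right[OF integrable_indicator_atMost] integrable_put_payoff])
    fix x :: real
    show "exp (-k) * (1 - exp (-1)) * indicator {..-(k + 1)} x \<le> max 0 (exp (-k) - exp x)"
    proof (cases "x \<le> -(k + 1)")
      case True
      then have "exp x \<le> exp (-k) * exp (-1)"
        by (simp add: exp_add[symmetric])
      with True show ?thesis
        by (simp add: indicator_def algebra_simps)
    qed (simp add: indicator_def)
  qed
  finally show ?thesis .
qed

lemma cdf_le_exp_moment:
  assumes "\<epsilon> > 0" and "integrable M (\<lambda>x. exp (- \<epsilon> * x))"
  shows "cdf M (-k) \<le> exp (- \<epsilon> * k) * (\<integral>x. exp (- \<epsilon> * x) \<partial>M)"
proof -
  have "set_integrable M (space M) (\<lambda>x. exp (- \<epsilon> * x))"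
    using assms(2) by (simp add: set_integrable_def borel_UNIV)
  from Chernoff_ineq_le[OF assms(1) this sets.top]
  have "measure M {x \<in> space M. x \<le> -k} \<le> exp (\<epsilon> * -k) * (\<integral>x\<in>space M. exp (- \<epsilon> * x) \<partial>M)" .
  then show ?thesis
    unfolding set_integral_space[OF assms(2)] by (simp add: cdf_def borel_UNIV atMost_def)
qed

lemma cdf_pos_if_eventually_minus_ln_pos:
  assumes "\<forall>\<^sub>F k in at_top. 0 < - ln (cdf M (-k))"
  shows "0 < cdf M x"
proof -
  obtain N where N: "\<And>k. k \<ge> N \<Longrightarrow> -x \<le> k \<and> 0 < - ln (cdf M (-k))"
    using eventually_conj[OF eventually_ge_at_top[of "-x"] assms]
    unfolding eventually_at_top_linorder by blast
  then have k: "-x \<le> N" "0 < - ln (cdf M (-N))"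
    by simp_all
  then have "0 < cdf M (-N)"
    using cdf_nonneg[of "-N"] by (cases "cdf M (-N) = 0") auto
  also have "\<dots> \<le> cdf M x"
    using k(1) by (intro cdf_nondecreasing) simp
  finally show ?thesis .
qed

lemma minus_ln_cdf_ge_linear:
  assumes "\<epsilon> > 0" and "integrable M (\<lambda>x. exp (- \<epsilon> * x))" and cdf_pos: "\<And>x. 0 < cdf M x"
  shows "\<forall>\<^sub>F k in at_top. \<epsilon> / 2 * k \<le> - ln (cdf M (-k))"
proof -
  define C where "C = (\<integral>x. exp (- \<epsilon> * x) \<partial>M)"
  have chernoff: "cdf M (-k) \<le> exp (- \<epsilon> * k) * C" for k
    unfolding C_def by (rule cdf_le_exp_moment[OF assms(1,2)])
  have "0 < C"
    using chernoff[of 0] cdf_pos[of 0] by simp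
  have affine: "\<epsilon> * k - ln C \<le> - ln (cdf M (-k))" for k
  proof -
    have "ln (cdf M (-k)) \<le> ln (exp (- \<epsilon> * k) * C)"
      using chernoff[of k] cdf_pos[of "-k"] \<open>0 < C\<close> by simp
    also have "\<dots> = - \<epsilon> * k + ln C"
      using \<open>0 < C\<close> by (simp add: ln_mult)
    finally show ?thesis
      by simp
  qed
  show ?thesis
    using eventually_ge_at_top[of "2 * \<bar>ln C\<bar> / \<epsilon>"]
  proof eventually_elim
    case (elim k)
    then have "2 * \<bar>ln C\<bar> \<le> \<epsilon> * k"
      using assms(1) by (simp add: divide_le_eq mult.commute)
    then show ?case
      using affine[of k] by linarith
  qed
qed

lemma put_price_pos:
  assumes "0 < cdf M (-(k + 1))"
  shows "0 < put_price M k"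
proof -
  have "0 < exp (-k) * (1 - exp (-1)) * cdf M (-(k + 1))"
    using assms by simp
  then show ?thesis
    using cdf_shift_le_put_price[of k] by linarith
qed

lemma minus_ln_put_price_bounds:
  assumes cdf_pos: "\<And>x. 0 < cdf M x"
  shows "k - ln (cdf M (-k)) \<le> - ln (put_price M k)"
    and "- ln (put_price M k) \<le> k - ln (1 - exp (-1)) - ln (cdf M (-(k + 1)))"
proof -
  have lower_pos: "0 < exp (-k) * (1 - exp (-1)) * cdf M (-(k + 1))"
    using cdf_pos by simp
  have put_pos: "0 < put_price M k"
    using put_price_pos cdf_pos by blast
  have "ln (put_price M k) \<le> ln (exp (-k) * cdf M (-k))"
    using put_price_le_cdf[of k] put_pos cdf_pos[of "-k"] by simp
  then show "k - ln (cdf M (-k)) \<le> - ln (put_price M k)"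
    using cdf_pos[of "-k"] by (simp add: ln_mult)
  have "ln (exp (-k) * (1 - exp (-1)) * cdf M (-(k + 1))) \<le> ln (put_price M k)"
    using cdf_shift_le_put_price[of k] lower_pos by simp
  then show "- ln (put_price M k) \<le> k - ln (1 - exp (-1)) - ln (cdf M (-(k + 1)))"
    using cdf_pos[of "-(k + 1)"] by (simp add: ln_mult)
qed

lemma regularly_varying_minus_ln_put_price:
  assumes \<epsilon>: "\<epsilon> > 0" "integrable M (\<lambda>x. exp (- \<epsilon> * x))"
    and rv: "regularly_varying (\<lambda>k. - ln (cdf M (-k)))"
  shows "regularly_varying (\<lambda>k. - ln (put_price M k))"
    and "((\<lambda>k. - ln (put_price M k) / (k - ln (cdf M (-k)))) \<longlongrightarrow> 1) at_top"
proof -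
  define g where "g k = - ln (cdf M (-k))" for k
  define h where "h k = - ln (put_price M k)" for k
  obtain \<alpha> where rv_g: "has_rv_index g \<alpha>" and g_pos: "\<forall>\<^sub>F k in at_top. 0 < g k"
    using rv unfolding regularly_varying_iff_has_rv_index g_def by blast
  have cdf_pos: "0 < cdf M x" for x
    using g_pos unfolding g_def by (rule cdf_pos_if_eventually_minus_ln_pos)
  have mono_g: "mono g"
  proof (rule monoI)
    fix x y :: real
    assume "x \<le> y"
    then have "cdf M (-y) \<le> cdf M (-x)"
      by (intro cdf_nondecreasing) simp
    then show "g x \<le> g y"
      using cdf_pos by (simp add: g_def)
  qed
  have lin: "\<forall>\<^sub>F k in at_top. \<epsilon> / 2 * k \<le> g k"
    unfolding g_def by (rule minus_ln_cdf_ge_linear[OF \<epsilon> cdf_pos])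
  have bounds: "\<forall>\<^sub>F k in at_top. k + g k \<le> h k \<and> h k \<le> (k + 1) + g (k + 1) + (- 1 - ln (1 - exp (-1)))"
  proof (intro always_eventually allI)
    fix k :: real
    show "k + g k \<le> h k \<and> h k \<le> (k + 1) + g (k + 1) + (- 1 - ln (1 - exp (-1)))"
      using minus_ln_put_price_bounds[OF cdf_pos, of k] by (simp add: g_def h_def)
  qed
  have "\<epsilon> / 2 > 0"
    using \<epsilon>(1) by simp
  note h_asymp = has_rv_index_of_shift_bounds[OF mono_g rv_g \<open>\<epsilon> / 2 > 0\<close> lin bounds]
  have "mono h"
  proof (rule monoI)
    fix x y :: real
    assume "x \<le> y"
    moreover have "0 < put_price M y"
      using put_price_pos cdf_pos by blast
    ultimately show "h x \<le> h y"
      using put_price_antimono[of x y] by (simp add: h_def)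
  qed
  moreover have "\<forall>\<^sub>F k in at_top. 0 < h k"
    using lin bounds eventually_gt_at_top[of 0]
  proof eventually_elim
    case (elim k)
    then show ?case
      using mult_pos_pos[OF \<open>\<epsilon> / 2 > 0\<close>, of k] by linarith
  qed
  ultimately show "regularly_varying (\<lambda>k. - ln (put_price M k))"
    using h_asymp(1) borel_measurable_mono unfolding regularly_varying_iff_has_rv_index h_def by blast
  show "((\<lambda>k. - ln (put_price M k) / (k - ln (cdf M (-k)))) \<longlongrightarrow> 1) at_top"
    using h_asymp(2) by (simp add: g_def h_def)
qed

end

theorem lemma5:
  fixes M :: "'a measure" and X :: "'a \<Rightarrow> real" and F p :: "real \<Rightarrow> real"
  assumes "prob_space M"
    and "X \<in> borel_measurable M"
    and "\<And>x. F x = measure M {\<omega> \<in> space M. X \<omega> \<le> x}"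
    and "\<exists>\<epsilon>>0. integrable M (\<lambda>\<omega>. exp (- \<epsilon> * X \<omega>))"
    and "\<And>k. p (-k) = (LINT x:{..-k}|distr M borel X. exp (-k) - exp x)"
    and "regularly_varying (\<lambda>k. - ln (F (-k)))"
  shows "regularly_varying (\<lambda>k. - ln (p (-k))) \<and>
         (\<lambda>k. - ln (p (-k))) \<sim>[at_top] (\<lambda>k. k - ln (F (-k)))"
proof -
  interpret prob_space M by fact
  define \<mu> where "\<mu> = distr M borel X"
  interpret \<mu>: real_distribution \<mu>
    unfolding \<mu>_def using assms(2) by simp
  have F: "F x = cdf \<mu> x" for x
    using assms(2,3) by (simp add: \<mu>_def cdf_def measure_distr vimage_def Int_def conj_commute)
  have p: "p (-k) = put_price \<mu> k" for k
    using assms(5) by (simp add: put_price_eq_set_integral \<mu>_def)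
  obtain \<epsilon> where "\<epsilon> > 0" and "integrable M (\<lambda>\<omega>. exp (- \<epsilon> * X \<omega>))"
    using assms(4) by blast
  then have "integrable \<mu> (\<lambda>x. exp (- \<epsilon> * x))"
    using assms(2) by (simp add: \<mu>_def integrable_distr_eq)
  note put_asymp = \<mu>.regularly_varying_minus_ln_put_price[OF \<open>\<epsilon> > 0\<close> this]
  show ?thesis
    using put_asymp assms(6) by (simp add: F p asymp_equivI')
qed

end
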